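(* Let $(a_n)_n=[a_{n\varepsilon}]_{\mathrm s}\in\widetilde{\mathbb C}_{\mathrm s}$. Assume that there are $k=[k_\varepsilon]\in\widetilde{\mathbb N}$ with $k_\varepsilon\in\mathbb N$ and $L=[L_\varepsilon]\in\widetilde{\mathbb R}_{>0}$ such that for all sufficiently small $\varepsilon$ and all $n\in\mathbb N$ with $n\ge k_\varepsilon$ (and $n\ge1$), $$|a_{n\varepsilon}|^{1/n}\le L_\varepsilon .$$ If $L<1$, then the hyperseries $\sum_{n\in\widetilde{\mathbb N}}|a_n|$ (where $(|a_n|)_n:=[|a_{n\varepsilon}|]_{\mathrm s}$) converges, and hence also $\sum_{n\in\widetilde{\mathbb N}}a_n$ converges.
   Context: Fix $I=(0,1]$ and a gauge $\rho=(\rho_\varepsilon)_{\varepsilon\in I}$ with $\rho_\varepsilon\in I$ and $\rho_\varepsilon\to0$ as $\varepsilon\to0$. "$\forall^0\varepsilon$" means "for all sufficiently small $\varepsilon\in I$". A net $(x_\varepsilon)\in\mathbb C^I$ is $\rho$-moderate ($(x_\varepsilon)\in\mathbb C_\rho$) if $\exists N\in\mathbb N\,\forall^0\varepsilon:|x_\varepsilon|\le\rho_\varepsilon^{-N}$, and $\rho$-negligible if $\forall q\in\mathbb N\,\forall^0\varepsilon:|x_\varepsilon|\le\rho_\varepsilon^q$. $\widetilde{\mathbb C}:=\mathbb C_\rho/\{\text{negligible nets}\}$ with classes $[x_\varepsilon]$; $\widetilde{\mathbb R}\subseteq\widetilde{\mathbb C}$ consists of classes of real moderate nets; $\mathrm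 d\rho:=[\rho_\varepsilon]$, $|[z_\varepsilon]|:=[|z_\varepsilon|]$. On $\widetilde{\mathbb R}$: $[x_\varepsilon]\le[y_\varepsilon]$ iff $x_\varepsilon\le y_\varepsilon+z_\varepsilon$ $\forall^0\varepsilon$ for some negligible $(z_\varepsilon)$; $x<y$ iff $\exists m\,\forall^0\varepsilon:y_\varepsilon-x_\varepsilon>\rho_\varepsilon^m$; $\widetilde{\mathbb R}_{>0}:=\{x:x>0\}$. Hypernatural numbers: $\widetilde{\mathbb N}:=\{[n_\varepsilon]\in\widetilde{\mathbb R}:n_\varepsilon\in\mathbb N\ \forall\varepsilon\}$; for each $N\in\widetilde{\mathbb N}$ a representative $(\mathrm{ni}(N)_\varepsilon)$ with all $\mathrm{ni}(N)_\varepsilon\in\mathbb N$ is fixed. Hyperlimit: for a map $n\in\widetilde{\mathbb N}\mapsto a_n\in\widetilde{\mathbb C}$, $l=\lim_{n\in\widetilde{\mathbb N}}a_n$ means $\forall q\in\mathbb N\,\exists M\in\widetilde{\mathbb N}\,\forall n\in\widetilde{\mathbb N}:n\ge M\Rightarrow|a_n-l|<\mathrm d\rho^q$. Hyperseries: a net $(a_{n\varepsilon})_{n\in\mathbb N,\varepsilon\in I}$ of complex numbers is moderate over hypersums if for every $N\in\widetilde{\mathbb N}$ the net $(\sum_{n=0}^{\mathrm{ni}(N)_\varepsilon}a_{n\varepsilon})_\varepsilon$ is $\rho$-moderate; two such nets $(a_{n\varepsilon}),(\bar a_{n\varepsilon})$ are equivalent if for all $N,M\in\widetilde{\mathbb N}$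 the net $(\sum_{n=\mathrm{ni}(N)_\varepsilon}^{\mathrm{ni}(M)_\varepsilon}(a_{n\varepsilon}-\bar a_{n\varepsilon}))_\varepsilon$ is negligible. The quotient is $\widetilde{\mathbb C}_{\mathrm s}$ (resp. $\widetilde{\mathbb R}_{\mathrm s}$ for real nets), with classes $(a_n)_n=[a_{n\varepsilon}]_{\mathrm s}$. For $N,M\in\widetilde{\mathbb N}$, $\sum_{n=N}^Ma_n:=[\sum_{n=\mathrm{ni}(N)_\varepsilon}^{\mathrm{ni}(M)_\varepsilon}a_{n\varepsilon}]$ (empty sums equal $0$). The hyperseries $\sum_{n\in\widetilde{\mathbb N}}a_n$ converges to $s$ if $s=\lim_{N\in\widetilde{\mathbb N}}\sum_{n=0}^Na_n$ exists in $\widetilde{\mathbb C}$. *)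

theory Defs
  imports Complex_Main
begin

text \<open>Nets are functions on the parameter eps; only eps in I = (0,1] matter.
  "for all sufficiently small eps" is eventually along at_right 0.\<close>

definition gauge :: "(real \<Rightarrow> real) \<Rightarrow> bool" where
  "gauge \<rho> \<longleftrightarrow> (\<forall>e. 0 < e \<and> e \<le> 1 \<longrightarrow> 0 < \<rho> e \<and> \<rho> e \<le> 1) \<and> (\<rho> \<longlongrightarrow> 0) (at_right 0)"

definition moderate :: "(real \<Rightarrow> real) \<Rightarrow> (real \<Rightarrow> 'a::real_normed_vector) \<Rightarrow> bool" where
  "moderate \<rho> x \<longleftrightarrow> (\<exists>N::nat. eventually (\<lambda>e. norm (x e) \<le> inverse (\<rho> e ^ N)) (at_right 0))"

definition negligible :: "(real \<Rightarrow> real) \<Rightarrow> (real \<Rightarrow> 'a::real_normed_vector) \<Rightarrow> bool" where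
  "negligible \<rho> x \<longleftrightarrow> (\<forall>q::nat. eventually (\<lambda>e. norm (x e) \<le> \<rho> e ^ q) (at_right 0))"

definition hyp_le :: "(real \<Rightarrow> real) \<Rightarrow> (real \<Rightarrow> real) \<Rightarrow> (real \<Rightarrow> real) \<Rightarrow> bool" where
  "hyp_le \<rho> x y \<longleftrightarrow> (\<exists>z. negligible \<rho> z \<and> eventually (\<lambda>e. x e \<le> y e + z e) (at_right 0))"

definition hyp_less :: "(real \<Rightarrow> real) \<Rightarrow> (real \<Rightarrow> real) \<Rightarrow> (real \<Rightarrow> real) \<Rightarrow> bool" where
  "hyp_less \<rho> x y \<longleftrightarrow> (\<exists>m::nat. eventually (\<lambda>e. y e - x e > \<rho> e ^ m) (at_right 0))"

definition hypernat :: "(real \<Rightarrow> real) \<Rightarrow> (real \<Rightarrow> nat) \<Rightarrow> bool" where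
  "hypernat \<rho> n \<longleftrightarrow> moderate \<rho> (\<lambda>e. real (n e))"

text \<open>A net (a n e) is moderate over hypersums (i.e. represents an element of C~_s).\<close>
definition moderate_hypersums :: "(real \<Rightarrow> real) \<Rightarrow> (nat \<Rightarrow> real \<Rightarrow> complex) \<Rightarrow> bool" where
  "moderate_hypersums \<rho> a \<longleftrightarrow>
     (\<forall>N. hypernat \<rho> N \<longrightarrow> moderate \<rho> (\<lambda>e. \<Sum>n\<le>N e. a n e))"

text \<open>The hyperseries with terms [a n e]_s converges (to some s in C~): the hyperlimit
  of the partial hypersums sum_{n=0}^N a_n exists.\<close>
definition hyperseries_converges :: "(real \<Rightarrow> real) \<Rightarrow> (nat \<Rightarrow> real \<Rightarrow> complex) \<Rightarrow> bool" where
  "hyperseries_converges \<rho> a \<longleftrightarrow>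
     (\<exists>s. moderate \<rho> s \<and>
        (\<forall>q::nat. \<exists>M. hypernat \<rho> M \<and>
           (\<forall>N. hypernat \<rho> N \<and> hyp_le \<rho> (\<lambda>e. real (M e)) (\<lambda>e. real (N e)) \<longrightarrow>
              hyp_less \<rho> (\<lambda>e. norm ((\<Sum>n\<le>N e. a n e) - s e)) (\<lambda>e. \<rho> e ^ q))))"

end

theory Submission
  imports Defs
begin

text \<open>For small \<epsilon> the root condition gives |a_n| \<le> L^n beyond k, and 1 - L \<ge> \<rho>^m for
  some m. Hence each series \<Sum>|a_n| converges, its sum is at most the (moderate) initial sum up
  to k plus \<rho>^-m, and its remainder after N is at most L^N / (1 - L) \<le> 1 / (\<rho>^(2m) N). So the
  remainder drops below \<rho>^q from the hypernatural index k + \<rho>^-(q + 2m) on, which makes the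
  classical sums the hyperlimits of both hyperseries.\<close>

lemma gauge_eventually_small:
  assumes "gauge \<rho>"
  shows "eventually (\<lambda>e. 0 < \<rho> e \<and> \<rho> e < 1/2) (at_right 0)"
proof -
  have "eventually (\<lambda>e::real. e \<in> {0<..<1}) (at_right 0)"
    by (rule eventually_at_right_real) simp
  moreover have "eventually (\<lambda>e. \<rho> e < 1/2) (at_right 0)"
    using assms unfolding gauge_def by (intro order_tendstoD(2)) auto
  ultimately show ?thesis
    by eventually_elim (use assms in \<open>auto simp: gauge_def\<close>)
qed

lemma moderate_norm_le:
  assumes "moderate \<rho> y" and "eventually (\<lambda>e. norm (x e) \<le> norm (y e)) (at_right 0)"
  shows "moderate \<rho> x"
proof -
  obtain N where "eventually (\<lambda>e. norm (y e) \<le> inverse (\<rho> e ^ N)) (at_right 0)"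
    using assms(1) unfolding moderate_def by blast
  with assms(2) show ?thesis
    unfolding moderate_def by (auto elim: eventually_mono[OF eventually_conj] intro!: exI[of _ N])
qed

lemma moderate_inverse_power:
  assumes "gauge \<rho>"
  shows "moderate \<rho> (\<lambda>e. inverse (\<rho> e ^ N))"
  unfolding moderate_def
  by (rule exI[of _ N]) (use gauge_eventually_small[OF assms] in \<open>eventually_elim, auto\<close>)

lemma moderate_const:
  fixes c :: "'a::real_normed_vector"
  assumes "gauge \<rho>"
  shows "moderate \<rho> (\<lambda>_. c)"
proof -
  have "0 < inverse (norm c + 1)"
    by (simp add: add_nonneg_pos)
  then have "eventually (\<lambda>e. \<rho> e < inverse (norm c + 1)) (at_right 0)"
    using assms unfolding gauge_def by (intro order_tendstoD(2)) auto
  then have "eventually (\<lambda>e. norm c \<le> inverse (\<rho> e ^ 1)) (at_right 0)"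
    using gauge_eventually_small[OF assms]
  proof eventually_elim
    case (elim e)
    then have "norm c + 1 \<le> inverse (\<rho> e)"
      by (metis inverse_inverse_eq le_imp_inverse_le less_imp_le)
    then show ?case by simp
  qed
  then show ?thesis unfolding moderate_def by blast
qed

lemma moderate_add:
  fixes x y :: "real \<Rightarrow> 'a::real_normed_vector"
  assumes "gauge \<rho>" and "moderate \<rho> x" and "moderate \<rho> y"
  shows "moderate \<rho> (\<lambda>e. x e + y e)"
proof -
  obtain N1 where N1: "eventually (\<lambda>e. norm (x e) \<le> inverse (\<rho> e ^ N1)) (at_right 0)"
    using assms(2) unfolding moderate_def by blast
  obtain N2 where N2: "eventually (\<lambda>e. norm (y e) \<le> inverse (\<rho> e ^ N2)) (at_right 0)"
    using assms(3) unfolding moderate_def by blast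
  define N where "N = max N1 N2"
  have "eventually (\<lambda>e. norm (x e + y e) \<le> inverse (\<rho> e ^ Suc N)) (at_right 0)"
    using N1 N2 gauge_eventually_small[OF assms(1)]
  proof eventually_elim
    case (elim e)
    have "inverse (\<rho> e ^ N1) \<le> inverse (\<rho> e ^ N)" "inverse (\<rho> e ^ N2) \<le> inverse (\<rho> e ^ N)"
      using elim by (auto simp: N_def intro!: le_imp_inverse_le power_decreasing)
    moreover have "2 * inverse (\<rho> e ^ N) \<le> inverse (\<rho> e ^ Suc N)"
      using elim by (simp add: field_simps)
    ultimately show ?case
      using elim norm_triangle_ineq[of "x e" "y e"] by linarith
  qed
  then show ?thesis unfolding moderate_def by blast
qed

lemma moderate_mult:
  fixes x y :: "real \<Rightarrow> 'a::real_normed_algebra"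
  assumes "moderate \<rho> x" and "moderate \<rho> y"
  shows "moderate \<rho> (\<lambda>e. x e * y e)"
proof -
  obtain N1 where N1: "eventually (\<lambda>e. norm (x e) \<le> inverse (\<rho> e ^ N1)) (at_right 0)"
    using assms(1) unfolding moderate_def by blast
  obtain N2 where N2: "eventually (\<lambda>e. norm (y e) \<le> inverse (\<rho> e ^ N2)) (at_right 0)"
    using assms(2) unfolding moderate_def by blast
  have "eventually (\<lambda>e. norm (x e * y e) \<le> inverse (\<rho> e ^ (N1 + N2))) (at_right 0)"
    using N1 N2
  proof eventually_elim
    case (elim e)
    have "norm (x e * y e) \<le> norm (x e) * norm (y e)" by (rule norm_mult_ineq)
    also have "\<dots> \<le> inverse (\<rho> e ^ N1) * inverse (\<rho> e ^ N2)"
      using elim by (intro mult_mono') auto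
    finally show ?case by (simp add: power_add)
  qed
  then show ?thesis unfolding moderate_def by blast
qed

lemma ex_argmax_atMost:
  fixes f :: "nat \<Rightarrow> 'a::linorder"
  shows "\<exists>j\<le>n. \<forall>i\<le>n. f i \<le> f j"
proof (induction n)
  case (Suc n)
  then obtain j where j: "j \<le> n" "\<forall>i\<le>n. f i \<le> f j" by blast
  show ?case
  proof (cases "f j \<le> f (Suc n)")
    case True
    then show ?thesis using j by (auto simp: le_Suc_eq intro: order.trans)
  next
    case False
    then show ?thesis using j by (auto simp: le_Suc_eq)
  qed
qed auto

text \<open>Every term up to a hypernatural index K is a difference of two partial sums, so it is
  bounded by twice the largest partial sum up to K, which is a moderate net since its index is
  again hypernatural.\<close>

lemma moderate_hypersums_initial_norms:
  assumes g: "gauge \<rho>" and a: "moderate_hypersums \<rho> a" and K: "hypernat \<rho> K"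
  shows "moderate \<rho> (\<lambda>e. \<Sum>n\<le>K e. norm (a n e))"
proof -
  define S where "S j e = (\<Sum>n\<le>j. a n e)" for j e
  obtain J where J: "\<And>e. J e \<le> K e" "\<And>e i. i \<le> K e \<Longrightarrow> norm (S i e) \<le> norm (S (J e) e)"
    using ex_argmax_atMost[of "K e" "\<lambda>i. norm (S i e)" for e] by metis
  have "hypernat \<rho> J"
    using K unfolding hypernat_def by (rule moderate_norm_le) (use J in auto)
  then have "moderate \<rho> (\<lambda>e. S (J e) e)"
    using a unfolding moderate_hypersums_def S_def by blast
  then have "moderate \<rho> (\<lambda>e. 2 * norm (S (J e) e))"
    by (intro moderate_mult moderate_const[OF g]) (auto elim: moderate_norm_le)
  moreover have "moderate \<rho> (\<lambda>e. real (K e) + 1)"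
    using K unfolding hypernat_def by (intro moderate_add moderate_const g)
  ultimately have bound_moderate: "moderate \<rho> (\<lambda>e. (real (K e) + 1) * (2 * norm (S (J e) e)))"
    by (simp add: moderate_mult)
  moreover have "norm (a n e) \<le> 2 * norm (S (J e) e)" if "n \<le> K e" for n e
  proof (cases n)
    case 0
    then have "norm (a n e) \<le> norm (S (J e) e)" using J(2)[of 0 e] by (simp add: S_def)
    then show ?thesis using norm_ge_zero[of "S (J e) e"] by linarith
  next
    case (Suc m)
    then have "a n e = S n e - S m e" by (simp add: S_def)
    then have "norm (a n e) \<le> norm (S n e) + norm (S m e)" by (simp add: norm_triangle_ineq4)
    then show ?thesis using J(2)[of n e] J(2)[of m e] that Suc by simp
  qed
  then have "(\<Sum>n\<le>K e. norm (a n e)) \<le> (real (K e) + 1) * (2 * norm (S (J e) e))" for e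
    using sum_mono[of "{..K e}" "\<lambda>n. norm (a n e)" "\<lambda>_. 2 * norm (S (J e) e)"] by (simp add: add.commute)
  then show ?thesis
    by (intro moderate_norm_le[OF bound_moderate] always_eventually allI) (simp add: sum_nonneg)
qed

lemma hyperseries_convergesI:
  assumes g: "gauge \<rho>" and "moderate \<rho> s"
    and tail: "\<And>q. \<exists>M. hypernat \<rho> M \<and>
       eventually (\<lambda>e. \<forall>N\<ge>M e. norm ((\<Sum>n\<le>N. b n e) - s e) \<le> \<rho> e ^ Suc q) (at_right 0)"
  shows "hyperseries_converges \<rho> b"
  unfolding hyperseries_converges_def
proof (intro exI[of _ s] conjI allI \<open>moderate \<rho> s\<close>)
  fix q
  obtain M where M: "hypernat \<rho> M"
    and ev: "eventually (\<lambda>e. \<forall>N\<ge>M e. norm ((\<Sum>n\<le>N. b n e) - s e) \<le> \<rho> e ^ Suc q) (at_right 0)"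
    using tail by blast
  have close: "hyp_less \<rho> (\<lambda>e. norm ((\<Sum>n\<le>N e. b n e) - s e)) (\<lambda>e. \<rho> e ^ q)"
    if MN: "hyp_le \<rho> (\<lambda>e. real (M e)) (\<lambda>e. real (N e))" for N
  proof -
    obtain z where "negligible \<rho> z" and le: "eventually (\<lambda>e. real (M e) \<le> real (N e) + z e) (at_right 0)"
      using MN unfolding hyp_le_def by blast
    then have z: "eventually (\<lambda>e. norm (z e) \<le> \<rho> e ^ 1) (at_right 0)"
      unfolding negligible_def by blast
    have "eventually (\<lambda>e. \<rho> e ^ q - norm ((\<Sum>n\<le>N e. b n e) - s e) > \<rho> e ^ (q + 2)) (at_right 0)"
      using ev le z gauge_eventually_small[OF g]
    proof eventually_elim
      case (elim e)
      \<comment> \<open>the negligible slack z is below 1/2, so M e \<le> N e holds on the nose\<close>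
      then have "real (M e) < real (N e) + 1" by auto
      then have "M e \<le> N e" by linarith
      then have "norm ((\<Sum>n\<le>N e. b n e) - s e) \<le> \<rho> e ^ q * \<rho> e"
        using elim by (simp add: mult.commute)
      moreover have "\<rho> e ^ q * (\<rho> e + \<rho> e * \<rho> e) < \<rho> e ^ q * 1"
      proof (rule mult_strict_left_mono)
        have "\<rho> e * \<rho> e < \<rho> e * (1/2)"
          using elim by (intro mult_strict_left_mono) auto
        then show "\<rho> e + \<rho> e * \<rho> e < 1" using elim by linarith
      qed (use elim in auto)
      ultimately show ?case by (simp add: power_add power2_eq_square algebra_simps)
    qed
    then show ?thesis unfolding hyp_less_def by blast
  qed
  show "\<exists>M. hypernat \<rho> M \<and> (\<forall>N. hypernat \<rho> N \<and> hyp_le \<rho> (\<lambda>e. real (M e)) (\<lambda>e. real (N e)) \<longrightarrow>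
      hyp_less \<rho> (\<lambda>e. norm ((\<Sum>n\<le>N e. b n e) - s e)) (\<lambda>e. \<rho> e ^ q))"
  proof (intro exI[of _ M] conjI M allI impI)
    fix N assume "hypernat \<rho> N \<and> hyp_le \<rho> (\<lambda>e. real (M e)) (\<lambda>e. real (N e))"
    then show "hyp_less \<rho> (\<lambda>e. norm ((\<Sum>n\<le>N e. b n e) - s e)) (\<lambda>e. \<rho> e ^ q)"
      using close by blast
  qed
qed

lemma le_power_if_root_le:
  fixes x L :: real
  assumes "0 \<le> x" and "1 \<le> n" and "x powr (1 / real n) \<le> L"
  shows "x \<le> L ^ n"
proof (cases "x = 0")
  case True
  then show ?thesis using assms by simp
next
  case False
  then have "x = (x powr (1 / real n)) ^ n"
    using assms by (simp add: powr_realpow[symmetric] powr_powr)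
  also have "\<dots> \<le> L ^ n" using assms by (intro power_mono) auto
  finally show ?thesis .
qed

lemma summable_geometric_majorant:
  fixes f :: "nat \<Rightarrow> real"
  assumes "\<And>n. 0 \<le> f n" and "0 \<le> L" and "L < 1" and "\<And>n. K \<le> n \<Longrightarrow> f n \<le> L ^ n"
  shows "summable f"
  by (rule summable_comparison_test'[of "\<lambda>n. L ^ n" K]) (use assms in auto)

lemma suminf_shift_geometric_majorant_le:
  fixes f :: "nat \<Rightarrow> real"
  assumes f0: "\<And>n. 0 \<le> f n" and L: "0 \<le> L" "L < 1" and fb: "\<And>n. K \<le> n \<Longrightarrow> f n \<le> L ^ n"
    and "K \<le> j"
  shows "(\<Sum>i. f (i + j)) \<le> L ^ j / (1 - L)"
proof -
  have geom: "summable (\<lambda>i. L ^ i)" using L by simp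
  have "(\<Sum>i. f (i + j)) \<le> (\<Sum>i. L ^ j * L ^ i)"
  proof (rule suminf_le)
    show "f (i + j) \<le> L ^ j * L ^ i" for i
      using fb[of "i + j"] \<open>K \<le> j\<close> by (simp add: power_add mult.commute)
    show "summable (\<lambda>i. f (i + j))"
      using summable_geometric_majorant[OF f0 L fb] by (rule summable_ignore_initial_segment)
    show "summable (\<lambda>i. L ^ j * L ^ i)" using geom by (rule summable_mult)
  qed
  also have "\<dots> = L ^ j / (1 - L)"
    using suminf_mult[OF geom, of "L ^ j"] suminf_geometric[of L] L by simp
  finally show ?thesis .
qed

lemma suminf_geometric_majorant_le:
  fixes f :: "nat \<Rightarrow> real"
  assumes f0: "\<And>n. 0 \<le> f n" and "0 \<le> L" and "0 < d" and gap: "d \<le> 1 - L"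
    and fb: "\<And>n. K \<le> n \<Longrightarrow> f n \<le> L ^ n"
  shows "suminf f \<le> (\<Sum>n\<le>K. f n) + inverse d"
proof -
  have L: "0 \<le> L" "L < 1" using assms by linarith+
  have "summable f" using f0 L fb by (rule summable_geometric_majorant)
  then have "suminf f = (\<Sum>n<K. f n) + (\<Sum>i. f (i + K))"
    by (simp add: suminf_split_initial_segment[of f K])
  also have "(\<Sum>n<K. f n) \<le> (\<Sum>n\<le>K. f n)"
    using f0 by (intro sum_mono2) auto
  also have "(\<Sum>i. f (i + K)) \<le> L ^ K / (1 - L)"
    using f0 L fb order_refl by (rule suminf_shift_geometric_majorant_le)
  also have "\<dots> \<le> 1 / d"
    using L gap \<open>0 < d\<close> by (intro frac_le power_le_one) auto
  finally show ?thesis by (simp add: inverse_eq_divide)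
qed

lemma power_div_le_if_gap:
  fixes L d :: real
  assumes "0 \<le> L" and "0 < d" and "d \<le> 1 - L" and "0 < n"
  shows "L ^ n / (1 - L) \<le> 1 / (d\<^sup>2 * real n)"
proof -
  have "L ^ n \<le> exp (- d) ^ n"
    using assms exp_ge_add_one_self[of "- d"] by (intro power_mono) auto
  also have "\<dots> = exp (- (d * real n))"
    by (simp add: exp_of_nat_mult[symmetric] mult.commute)
  also have "\<dots> = 1 / exp (d * real n)"
    by (simp add: exp_minus inverse_eq_divide)
  also have "\<dots> \<le> 1 / (d * real n)"
  proof (rule divide_left_mono)
    show "d * real n \<le> exp (d * real n)"
      using exp_ge_add_one_self[of "d * real n"] by linarith
  qed (use assms in auto)
  finally have "L ^ n / (1 - L) \<le> 1 / (d * real n) / d"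
    using assms by (intro frac_le) auto
  then show ?thesis by (simp add: power2_eq_square mult_ac)
qed

lemma suminf_minus_sum_geometric_majorant_le:
  fixes f :: "nat \<Rightarrow> real" and r :: real
  assumes f0: "\<And>n. 0 \<le> f n" and "0 \<le> L" and "0 < r" and gap: "r ^ m \<le> 1 - L"
    and fb: "\<And>n. K \<le> n \<Longrightarrow> f n \<le> L ^ n"
    and "K \<le> N" and N: "inverse (r ^ (p + 2 * m)) \<le> real N"
  shows "suminf f - (\<Sum>n\<le>N. f n) \<le> r ^ p"
proof -
  have r: "0 < r ^ m" "0 < r ^ (p + 2 * m)" using \<open>0 < r\<close> by simp_all
  with gap have L: "0 \<le> L" "L < 1" using \<open>0 \<le> L\<close> by linarith+
  have "summable f" using f0 L fb by (rule summable_geometric_majorant)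
  then have "suminf f - (\<Sum>n\<le>N. f n) = (\<Sum>i. f (i + Suc N))"
    using suminf_minus_initial_segment[of f "Suc N"]
    by (simp add: lessThan_Suc_atMost)
  also have "\<dots> \<le> L ^ Suc N / (1 - L)"
    using f0 L fb le_SucI[OF \<open>K \<le> N\<close>] by (rule suminf_shift_geometric_majorant_le)
  also have "\<dots> \<le> 1 / ((r ^ m)\<^sup>2 * real (Suc N))"
    using r gap L by (intro power_div_le_if_gap) auto
  also have "\<dots> \<le> r ^ p"
  proof -
    have "1 \<le> r ^ (p + 2 * m) * real N"
      using N r by (simp add: field_simps)
    also have "\<dots> = r ^ p * (r ^ m)\<^sup>2 * real N"
      by (simp add: power_add mult_2 power2_eq_square)
    also have "\<dots> \<le> r ^ p * (r ^ m)\<^sup>2 * real (Suc N)"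
      using \<open>0 < r\<close> by (intro mult_left_mono) auto
    finally have "1 \<le> r ^ p * ((r ^ m)\<^sup>2 * real (Suc N))" by (simp only: mult.assoc)
    moreover have "0 < (r ^ m)\<^sup>2 * real (Suc N)" using \<open>0 < r\<close> by (intro mult_pos_pos) auto
    ultimately show ?thesis by (simp only: divide_le_eq if_True)
  qed
  finally show ?thesis .
qed

lemma norm_sum_minus_suminf_le:
  fixes a :: "nat \<Rightarrow> 'a::banach"
  assumes s: "summable (\<lambda>n. norm (a n))"
  shows "norm ((\<Sum>n\<le>N. a n) - suminf a) \<le> (\<Sum>n. norm (a n)) - (\<Sum>n\<le>N. norm (a n))"
proof -
  have "norm ((\<Sum>n\<le>N. a n) - suminf a) = norm (\<Sum>i. a (i + Suc N))"
    using suminf_minus_initial_segment[OF summable_norm_cancel[OF s], of "Suc N"]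
    by (simp add: lessThan_Suc_atMost norm_minus_commute)
  also have "\<dots> \<le> (\<Sum>i. norm (a (i + Suc N)))"
    using s by (intro summable_norm summable_ignore_initial_segment)
  also have "\<dots> = (\<Sum>n. norm (a n)) - (\<Sum>n\<le>N. norm (a n))"
    using suminf_minus_initial_segment[OF s, of "Suc N"] by (simp add: lessThan_Suc_atMost)
  finally show ?thesis .
qed

lemma moderate_suminf_norm_geometric_majorant:
  fixes a :: "nat \<Rightarrow> real \<Rightarrow> 'a::real_normed_vector"
  assumes g: "gauge \<rho>" and initial: "moderate \<rho> (\<lambda>e. \<Sum>n\<le>K e. norm (a n e))"
    and bound: "eventually (\<lambda>e. 0 \<le> L e \<and> \<rho> e ^ m \<le> 1 - L e \<and>
      (\<forall>n\<ge>K e. norm (a n e) \<le> L e ^ n)) (at_right 0)"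
  shows "moderate \<rho> (\<lambda>e. \<Sum>n. norm (a n e))"
proof (rule moderate_norm_le)
  show "moderate \<rho> (\<lambda>e. (\<Sum>n\<le>K e. norm (a n e)) + inverse (\<rho> e ^ m))"
    by (intro moderate_add moderate_inverse_power g initial)
  show "eventually (\<lambda>e. norm (\<Sum>n. norm (a n e)) \<le>
    norm ((\<Sum>n\<le>K e. norm (a n e)) + inverse (\<rho> e ^ m))) (at_right 0)"
    using bound gauge_eventually_small[OF g]
  proof eventually_elim
    case (elim e)
    then have "0 < \<rho> e ^ m" by simp
    with elim have "L e < 1" by linarith
    with elim have "(\<Sum>n. norm (a n e)) \<le> (\<Sum>n\<le>K e. norm (a n e)) + inverse (\<rho> e ^ m)"
      by (intro suminf_geometric_majorant_le[of _ "L e"]) auto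
    moreover have "0 \<le> (\<Sum>n. norm (a n e))"
      using \<open>L e < 1\<close> elim
      by (intro suminf_nonneg summable_geometric_majorant[of _ "L e" "K e"]) auto
    ultimately show ?case by simp
  qed
qed

lemma hypernat_remainder_geometric_majorant:
  fixes a :: "nat \<Rightarrow> real \<Rightarrow> 'a::real_normed_vector"
  assumes g: "gauge \<rho>" and K: "hypernat \<rho> K"
    and bound: "eventually (\<lambda>e. 0 \<le> L e \<and> \<rho> e ^ m \<le> 1 - L e \<and>
      (\<forall>n\<ge>K e. norm (a n e) \<le> L e ^ n)) (at_right 0)"
  shows "\<exists>M. hypernat \<rho> M \<and> eventually (\<lambda>e. \<forall>N\<ge>M e.
    (\<Sum>n. norm (a n e)) - (\<Sum>n\<le>N. norm (a n e)) \<le> \<rho> e ^ p) (at_right 0)"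
proof (intro exI conjI)
  define M where "M e = K e + nat \<lceil>inverse (\<rho> e ^ (p + 2 * m))\<rceil>" for e
  show "hypernat \<rho> M"
    unfolding hypernat_def
  proof (rule moderate_norm_le)
    show "moderate \<rho> (\<lambda>e. real (K e) + (inverse (\<rho> e ^ (p + 2 * m)) + 1))"
      using K unfolding hypernat_def by (intro moderate_add moderate_inverse_power moderate_const g)
    show "eventually (\<lambda>e. norm (real (M e)) \<le>
      norm (real (K e) + (inverse (\<rho> e ^ (p + 2 * m)) + 1))) (at_right 0)"
      using gauge_eventually_small[OF g]
    proof eventually_elim
      case (elim e)
      then have "0 \<le> inverse (\<rho> e ^ (p + 2 * m))" by simp
      then have "real (M e) \<le> real (K e) + (inverse (\<rho> e ^ (p + 2 * m)) + 1)"
        unfolding M_def of_nat_add by linarith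
      then show ?case by simp
    qed
  qed
  show "eventually (\<lambda>e. \<forall>N\<ge>M e. (\<Sum>n. norm (a n e)) - (\<Sum>n\<le>N. norm (a n e)) \<le> \<rho> e ^ p)
    (at_right 0)"
    using bound gauge_eventually_small[OF g]
  proof eventually_elim
    case (elim e)
    show ?case
    proof (intro allI impI)
      fix N assume "M e \<le> N"
      then have "K e \<le> N" and "inverse (\<rho> e ^ (p + 2 * m)) \<le> real N"
        unfolding M_def by linarith+
      with elim show "(\<Sum>n. norm (a n e)) - (\<Sum>n\<le>N. norm (a n e)) \<le> \<rho> e ^ p"
        by (intro suminf_minus_sum_geometric_majorant_le[of _ "L e"]) auto
    qed
  qed
qed

lemma hyperseries_converges_dominated:
  assumes g: "gauge \<rho>" and "moderate \<rho> t"
    and small: "\<And>q. \<exists>M. hypernat \<rho> M \<and>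
      eventually (\<lambda>e. \<forall>N\<ge>M e. T N e \<le> \<rho> e ^ Suc q) (at_right 0)"
    and dominated: "eventually (\<lambda>e. \<forall>N. norm ((\<Sum>n\<le>N. b n e) - t e) \<le> T N e) (at_right 0)"
  shows "hyperseries_converges \<rho> b"
proof (rule hyperseries_convergesI[OF g \<open>moderate \<rho> t\<close>])
  fix q
  obtain M where "hypernat \<rho> M" and M: "eventually (\<lambda>e. \<forall>N\<ge>M e. T N e \<le> \<rho> e ^ Suc q) (at_right 0)"
    using small by blast
  moreover have "eventually (\<lambda>e. \<forall>N\<ge>M e. norm ((\<Sum>n\<le>N. b n e) - t e) \<le> \<rho> e ^ Suc q) (at_right 0)"
    using M dominated by eventually_elim (meson order_trans)
  ultimately show "\<exists>M. hypernat \<rho> M \<and>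
    eventually (\<lambda>e. \<forall>N\<ge>M e. norm ((\<Sum>n\<le>N. b n e) - t e) \<le> \<rho> e ^ Suc q) (at_right 0)"
    by blast
qed

lemma hyperseries_geometric_comparison:
  fixes a :: "nat \<Rightarrow> real \<Rightarrow> complex" and K :: "real \<Rightarrow> nat" and L :: "real \<Rightarrow> real"
  assumes g: "gauge \<rho>" and a: "moderate_hypersums \<rho> a" and K: "hypernat \<rho> K"
    and bound: "eventually (\<lambda>e. 0 \<le> L e \<and> \<rho> e ^ m \<le> 1 - L e \<and>
      (\<forall>n\<ge>K e. norm (a n e) \<le> L e ^ n)) (at_right 0)"
  shows "moderate_hypersums \<rho> (\<lambda>n e. complex_of_real (norm (a n e)))
    \<and> hyperseries_converges \<rho> (\<lambda>n e. complex_of_real (norm (a n e)))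
    \<and> hyperseries_converges \<rho> a"
proof -
  define s where "s e = (\<Sum>n. norm (a n e))" for e
  have s: "moderate \<rho> s"
    unfolding s_def using g moderate_hypersums_initial_norms[OF g a K] bound
    by (rule moderate_suminf_norm_geometric_majorant)
  have summable: "eventually (\<lambda>e. summable (\<lambda>n. norm (a n e))) (at_right 0)"
    using bound gauge_eventually_small[OF g]
  proof eventually_elim
    case (elim e)
    then have "L e < 1" using zero_less_power[of "\<rho> e" m] by linarith
    with elim show ?case by (intro summable_geometric_majorant[of _ "L e" "K e"]) auto
  qed
  have remainder: "\<exists>M. hypernat \<rho> M \<and>
    eventually (\<lambda>e. \<forall>N\<ge>M e. s e - (\<Sum>n\<le>N. norm (a n e)) \<le> \<rho> e ^ Suc q) (at_right 0)" for q
    unfolding s_def using g K bound by (rule hypernat_remainder_geometric_majorant)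
  have norm_partial: "norm (\<Sum>n\<le>N. complex_of_real (norm (a n e))) = (\<Sum>n\<le>N. norm (a n e))" for N e
    by (simp add: sum_nonneg flip: of_real_sum)
  have partial_le: "eventually (\<lambda>e. \<forall>N. (\<Sum>n\<le>N. norm (a n e)) \<le> s e) (at_right 0)"
    using summable unfolding s_def by eventually_elim (auto intro: sum_le_suminf)
  show ?thesis
  proof (intro conjI)
    show "moderate_hypersums \<rho> (\<lambda>n e. complex_of_real (norm (a n e)))"
      unfolding moderate_hypersums_def
    proof (intro allI impI)
      fix N :: "real \<Rightarrow> nat"
      show "moderate \<rho> (\<lambda>e. \<Sum>n\<le>N e. complex_of_real (norm (a n e)))"
        using s by (rule moderate_norm_le)
          (use partial_le in \<open>eventually_elim, simp add: norm_partial, meson abs_ge_self order_trans\<close>)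
    qed
    show "hyperseries_converges \<rho> (\<lambda>n e. complex_of_real (norm (a n e)))"
    proof (rule hyperseries_converges_dominated[OF g _ remainder])
      show "moderate \<rho> (\<lambda>e. complex_of_real (s e))"
        using s by (rule moderate_norm_le) simp
      show "eventually (\<lambda>e. \<forall>N. norm ((\<Sum>n\<le>N. complex_of_real (norm (a n e))) - complex_of_real (s e))
        \<le> s e - (\<Sum>n\<le>N. norm (a n e))) (at_right 0)"
        using partial_le by eventually_elim (simp add: norm_of_real flip: of_real_sum of_real_diff)
    qed
    show "hyperseries_converges \<rho> a"
    proof (rule hyperseries_converges_dominated[OF g _ remainder])
      show "moderate \<rho> (\<lambda>e. \<Sum>n. a n e)"
        using s by (rule moderate_norm_le)
          (use summable in \<open>eventually_elim, auto simp: s_def intro: order_trans[OF summable_norm abs_ge_self]\<close>)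
      show "eventually (\<lambda>e. \<forall>N. norm ((\<Sum>n\<le>N. a n e) - (\<Sum>n. a n e))
        \<le> s e - (\<Sum>n\<le>N. norm (a n e))) (at_right 0)"
        using summable by eventually_elim (simp add: s_def norm_sum_minus_suminf_le)
    qed
  qed
qed

theorem theorem2p18:
  fixes \<rho> :: "real \<Rightarrow> real" and a :: "nat \<Rightarrow> real \<Rightarrow> complex"
    and k :: "real \<Rightarrow> nat" and L :: "real \<Rightarrow> real"
  assumes "gauge \<rho>"
    and "moderate_hypersums \<rho> a"
    and "hypernat \<rho> k"
    and "moderate \<rho> L" and "hyp_less \<rho> (\<lambda>e. 0) L"
    and "eventually (\<lambda>e. \<forall>n::nat. n \<ge> k e \<and> n \<ge> 1 \<longrightarrow>
            norm (a n e) powr (1 / real n) \<le> L e) (at_right 0)"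
    and "hyp_less \<rho> L (\<lambda>e. 1)"
  shows "moderate_hypersums \<rho> (\<lambda>n e. complex_of_real (norm (a n e)))
    \<and> hyperseries_converges \<rho> (\<lambda>n e. complex_of_real (norm (a n e)))
    \<and> hyperseries_converges \<rho> a"
proof -
  note g = assms(1)
  define K where "K e = k e + 1" for e
  have "hypernat \<rho> K"
    using assms(3) unfolding hypernat_def K_def by (simp add: moderate_add moderate_const g)
  obtain m0 where m0: "eventually (\<lambda>e. L e - 0 > \<rho> e ^ m0) (at_right 0)"
    using assms(5) unfolding hyp_less_def by blast
  obtain m where m: "eventually (\<lambda>e. 1 - L e > \<rho> e ^ m) (at_right 0)"
    using assms(7) unfolding hyp_less_def by blast
  have "eventually (\<lambda>e. 0 \<le> L e \<and> \<rho> e ^ m \<le> 1 - L e \<and> (\<forall>n\<ge>K e. norm (a n e) \<le> L e ^ n))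
    (at_right 0)"
    using m0 m assms(6) gauge_eventually_small[OF g]
  proof eventually_elim
    case (elim e)
    then have "0 \<le> L e" using zero_less_power[of "\<rho> e" m0] by linarith
    with elim show ?case
      unfolding K_def by (auto intro: le_power_if_root_le)
  qed
  with g assms(2) \<open>hypernat \<rho> K\<close> show ?thesis
    by (rule hyperseries_geometric_comparison)
qed

end
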